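(* Let $p$ be an odd prime. If $p\equiv 1\pmod 3$, then \[ \frac{(2/3)_{(p-1)/3}^2}{(1)_{(p-1)/3}^2}\bigg\{1+p^2\sum_{i=1}^{(p-1)/3}\frac{1}{(3i-1)^2}\bigg\}\equiv \Gamma_p(1/3)^6\pmod{p^3}, \] and if $p\equiv 2\pmod 3$, then \[ \frac{(2/3)_{(2p-1)/3}^2}{(1)_{(2p-1)/3}^2}\bigg\{1-4p^2\sum_{i=1}^{(2p-1)/3}\frac{1}{(3i-1)^2}\bigg\}\equiv -\frac{p^2}{3}\Gamma_p(1/3)^6\pmod{p^3}. \]
   Context: For complex $x$, $(x)_0=1$ and $(x)_m=x(x+1)\cdots(x+m-1)$ for positive integers $m$. $\Gamma_p$ is Morita's $p$-adic Gamma function: $\Gamma_p(0)=1$, $\Gamma_p(n)=(-1)^n\prod_{1\le k<n,\ p\nmid k}k$ for positive integers $n$, extended to $x\in\mathbb{Z}_p$ by $\Gamma_p(x)=\lim_{n\in\mathbb{N},\,|x-n|_p\to 0}\Gamma_p(n)$. Congruences are in $\mathbb{Z}_p$. *)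

theory Defs
  imports Complex_Main "HOL-Computational_Algebra.Primes" "HOL-Number_Theory.Cong"
begin

definition padic_gamma_nat :: "nat \<Rightarrow> nat \<Rightarrow> int" where
  "padic_gamma_nat p n = (-1) ^ n * (\<Prod>k \<in> {k. 1 \<le> k \<and> k < n \<and> \<not> p dvd k}. int k)"

text \<open>Congruence of rationals in Z_p: x == y (mod p^k) iff x - y lies in p^k Z_(p),
  i.e. b (x - y) = p^k a for integers a, b with p not dividing b.\<close>
definition qcong :: "nat \<Rightarrow> nat \<Rightarrow> rat \<Rightarrow> rat \<Rightarrow> bool" where
  "qcong p k x y \<longleftrightarrow> (\<exists>a b :: int. \<not> int p dvd b \<and>
       of_int b * (x - y) = of_int (int p ^ k) * of_int a)"

text \<open>The p-adic limit of f(n) as the natural number n tends p-adically to x is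
  congruent to c modulo p^k: for all natural n sufficiently p-adically close to x,
  f(n) == c (mod p^k).  (Given that the limit exists, this is equivalent to
  "lim f(n) == c (mod p^k)" in Z_p.)\<close>
definition padic_lim_cong :: "nat \<Rightarrow> (nat \<Rightarrow> rat) \<Rightarrow> rat \<Rightarrow> nat \<Rightarrow> rat \<Rightarrow> bool" where
  "padic_lim_cong p f x k c \<longleftrightarrow>
     (\<exists>N. \<forall>n::nat. qcong p N (of_nat n) x \<longrightarrow> qcong p k (f n) c)"

end

theory Submission
  imports Defs "HOL-Number_Theory.Residues"
begin

text \<open>
  Write \<open>n = q p + r\<close> with \<open>0 < r \<le> p\<close>. Up to sign, \<open>\<Gamma>\<^sub>p(n)\<close> is the product of the \<open>q\<close>
  complete blocks \<open>(j p + 1) \<cdots> (j p + p - 1)\<close> and the partial block \<open>(q p + 1) \<cdots> (q p + r - 1)\<close>.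
  Expanding products of factors \<open>1 + p x\<close> to second order in \<open>p\<close>, the vanishing of \<open>\<Sum> 1/s\<close>
  modulo \<open>p\<^sup>2\<close> and of \<open>\<Sum> 1/s\<^sup>2\<close> modulo \<open>p\<close> (sums over \<open>0 < s < p\<close>) makes every complete
  block congruent to \<open>(p - 1)!\<close> modulo \<open>p\<^sup>3\<close>.

  If \<open>p = 3m + 1\<close> and \<open>n\<close> is close to \<open>1/3\<close>, then \<open>r = 2m + 1\<close> and \<open>q p \<equiv> -2p/3 (mod p\<^sup>3)\<close>,
  and Wilson's theorem lifted to \<open>p\<^sup>3\<close> gives \<open>(p - 1)!\<^sup>6\<^sup>q (p - 1)!\<^sup>4 \<equiv> 1\<close>. What remains is
  an identity between products over the residue classes \<open>3j + 1\<close>, \<open>3j + 2\<close>, \<open>3j + 3\<close> below \<open>p\<close>: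
  the reflection \<open>s \<mapsto> p - s\<close> swaps the first and the last class and preserves the middle one,
  and after expanding the resulting ratios to second order only the factor
  \<open>1 + p\<^sup>2 \<Sum> 1/(3i - 1)\<^sup>2\<close> survives.

  If \<open>p = 3m + 2\<close>, both sides carry the factor \<open>p\<^sup>2\<close>, so a congruence modulo \<open>p\<close> suffices:
  then \<open>r = m + 1\<close>, \<open>\<Gamma>\<^sub>p(n)\<^sup>6 \<equiv> (m!)\<^sup>6\<close>, and Wilson's theorem together with the reflection
  \<open>(2m + 2) \<cdots> (3m + 1) \<equiv> (-1)\<^sup>m m!\<close> reduces the right-hand side to the same value.
\<close>

lemma prod_lessThan_add: "(\<Prod>k<a + b. f k) = (\<Prod>k<a. f k) * (\<Prod>k<b. f (a + k))"
  for f :: "nat \<Rightarrow> 'a::comm_monoid_mult"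
  by (induction b) (simp_all add: ac_simps)

lemma sum_lessThan_add: "(\<Sum>k<a + b. f k) = (\<Sum>k<a. f k) + (\<Sum>k<b. f (a + k))"
  for f :: "nat \<Rightarrow> 'a::comm_monoid_add"
  by (induction b) (simp_all add: ac_simps)

lemma prod_lessThan_3_mult: "(\<Prod>k<3 * m. f k) = (\<Prod>j<m. f (3 * j) * f (3 * j + 1) * f (3 * j + 2))"
  for f :: "nat \<Rightarrow> 'a::comm_monoid_mult"
proof (induction m)
  case (Suc m)
  have "3 * Suc m = 3 * m + 3" by simp
  then show ?case using Suc by (simp only: prod_lessThan_add) (simp add: eval_nat_numeral ac_simps)
qed simp

lemma sum_lessThan_3_mult: "(\<Sum>k<3 * m. f k) = (\<Sum>j<m. f (3 * j) + f (3 * j + 1) + f (3 * j + 2))"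
  for f :: "nat \<Rightarrow> 'a::comm_monoid_add"
proof (induction m)
  case (Suc m)
  have "3 * Suc m = 3 * m + 3" by simp
  then show ?case using Suc by (simp only: sum_lessThan_add) (simp add: eval_nat_numeral ac_simps)
qed simp

section \<open>Congruences in the localization at a prime\<close>

definition p_integral :: "nat \<Rightarrow> rat \<Rightarrow> bool" where
  "p_integral p x \<longleftrightarrow> (\<exists>a b :: int. \<not> int p dvd b \<and> of_int b * x = of_int a)"

lemma qcong_iff: "qcong p k x y \<longleftrightarrow> (\<exists>z. p_integral p z \<and> x - y = of_nat p ^ k * z)"
proof
  assume "qcong p k x y"
  then obtain a b :: int where b: "\<not> int p dvd b" "of_int b * (x - y) = of_int (int p ^ k) * of_int a"
    unfolding qcong_def by blast
  have "b \<noteq> 0" using b(1) by auto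
  then have "x - y = of_nat p ^ k * (of_int a / of_int b)" using b(2) by (simp add: field_simps)
  moreover have "p_integral p (of_int a / of_int b)"
    unfolding p_integral_def using b(1) \<open>b \<noteq> 0\<close> by (intro exI[of _ a] exI[of _ b]) simp
  ultimately show "\<exists>z. p_integral p z \<and> x - y = of_nat p ^ k * z" by blast
next
  assume "\<exists>z. p_integral p z \<and> x - y = of_nat p ^ k * z"
  then obtain z a b where "x - y = of_nat p ^ k * z" "\<not> int p dvd b" "of_int b * z = of_int a"
    unfolding p_integral_def by blast
  then have "of_int b * (x - y) = of_int (int p ^ k) * of_int a" "\<not> int p dvd b"
    by (simp_all add: algebra_simps)
  then show "qcong p k x y" unfolding qcong_def by blast
qed

locale prime_localization =
  fixes p :: nat
  assumes prime: "prime p"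
begin

abbreviation P :: rat where "P \<equiv> of_nat p"

lemma p_integral_of_int [simp]: "p_integral p (of_int a)"
  unfolding p_integral_def using prime by (intro exI[of _ a] exI[of _ 1]) auto

lemma p_integral_of_nat [simp]: "p_integral p (of_nat a)"
  using p_integral_of_int[of "int a"] by simp

lemma p_integral_numeral [simp]: "p_integral p (numeral a)"
  using p_integral_of_nat[of "numeral a"] by simp

lemma p_integral_0 [simp]: "p_integral p 0" and p_integral_1 [simp]: "p_integral p 1"
  using p_integral_of_nat[of 0] p_integral_of_nat[of 1] by auto

lemma not_dvd_mult: "\<not> int p dvd b \<Longrightarrow> \<not> int p dvd d \<Longrightarrow> \<not> int p dvd (b * d)"
  using prime by (meson prime_dvd_mult_iff prime_nat_int_transfer)

lemma p_integral_add [intro]: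
  assumes "p_integral p x" "p_integral p y"
  shows "p_integral p (x + y)"
proof -
  obtain a b where "\<not> int p dvd b" "of_int b * x = of_int a" using assms(1) p_integral_def by auto
  moreover obtain c d where "\<not> int p dvd d" "of_int d * y = of_int c" using assms(2) p_integral_def by auto
  ultimately have "of_int (b * d) * (x + y) = of_int (a * d + c * b)" "\<not> int p dvd (b * d)"
    by (simp_all add: algebra_simps not_dvd_mult)
  then show ?thesis unfolding p_integral_def by blast
qed

lemma p_integral_mult [intro]:
  assumes "p_integral p x" "p_integral p y"
  shows "p_integral p (x * y)"
proof -
  obtain a b where "\<not> int p dvd b" "of_int b * x = of_int a" using assms(1) p_integral_def by auto
  moreover obtain c d where "\<not> int p dvd d" "of_int d * y = of_int c" using assms(2) p_integral_def by auto
  ultimately have "of_int (b * d) * (x * y) = of_int (a * c)" "\<not> int p dvd (b * d)"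
    by (simp_all add: algebra_simps not_dvd_mult)
  then show ?thesis unfolding p_integral_def by blast
qed

lemma p_integral_uminus [intro]: "p_integral p x \<Longrightarrow> p_integral p (- x)"
  using p_integral_mult[OF p_integral_of_int[of "-1"]] by simp

lemma p_integral_diff [intro]: "p_integral p x \<Longrightarrow> p_integral p y \<Longrightarrow> p_integral p (x - y)"
  using p_integral_add[of x "- y"] by auto

lemma p_integral_power [intro]: "p_integral p x \<Longrightarrow> p_integral p (x ^ n)"
  by (induction n) auto

lemma p_integral_sum [intro]: "(\<And>i. i \<in> A \<Longrightarrow> p_integral p (f i)) \<Longrightarrow> p_integral p (sum f A)"
  by (induction A rule: infinite_finite_induct) auto

lemma p_integral_prod [intro]: "(\<And>i. i \<in> A \<Longrightarrow> p_integral p (f i)) \<Longrightarrow> p_integral p (prod f A)"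
  by (induction A rule: infinite_finite_induct) auto

lemma p_integral_divide_of_nat [intro]:
  assumes "p_integral p x" "\<not> p dvd b"
  shows "p_integral p (x / of_nat b)"
proof -
  obtain a c where "\<not> int p dvd c" "of_int c * x = of_int a" using assms(1) p_integral_def by auto
  moreover have "b \<noteq> 0" "\<not> int p dvd int b" using assms(2) by (metis dvd_0_right, simp)
  ultimately have "of_int (c * int b) * (x / of_nat b) = of_int a" "\<not> int p dvd (c * int b)"
    by (simp_all add: not_dvd_mult)
  then show ?thesis unfolding p_integral_def by blast
qed

lemma p_integral_inverse_of_nat [intro]: "\<not> p dvd b \<Longrightarrow> p_integral p (1 / of_nat b)"
  using p_integral_divide_of_nat[of 1 b] by simp

lemma p_integral_inverse_of_nat_less [intro]: "0 < b \<Longrightarrow> b < p \<Longrightarrow> p_integral p (1 / of_nat b)"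
  by (rule p_integral_inverse_of_nat) (auto dest: dvd_imp_le)

lemma p_integral_inverse_prod:
  assumes "\<And>i. i \<in> A \<Longrightarrow> \<not> p dvd g i"
  shows "p_integral p (1 / (\<Prod>i\<in>A. of_nat (g i)))"
proof -
  have "p_integral p (\<Prod>i\<in>A. 1 / of_nat (g i))" using assms by auto
  then show ?thesis by (simp add: prod_dividef)
qed

lemma qcong_refl [simp]: "qcong p k x x"
  unfolding qcong_iff by (intro exI[of _ 0]) auto

lemma qcong_sym: "qcong p k x y \<Longrightarrow> qcong p k y x"
  unfolding qcong_iff by (metis minus_diff_eq mult_minus_right p_integral_uminus)

lemma qcong_trans [trans]: "qcong p k x y \<Longrightarrow> qcong p k y z \<Longrightarrow> qcong p k x z"
  unfolding qcong_iff
proof (elim exE conjE)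
  fix u v assume "p_integral p u" "x - y = P ^ k * u" "p_integral p v" "y - z = P ^ k * v"
  then show "\<exists>w. p_integral p w \<and> x - z = P ^ k * w"
    by (intro exI[of _ "u + v"]) (auto simp: algebra_simps)
qed

lemma qcong_add: "qcong p k x y \<Longrightarrow> qcong p k u v \<Longrightarrow> qcong p k (x + u) (y + v)"
  unfolding qcong_iff by (metis add_diff_add p_integral_add distrib_left)

lemma qcong_uminus: "qcong p k x y \<Longrightarrow> qcong p k (- x) (- y)"
  unfolding qcong_iff by (metis minus_diff_eq minus_diff_minus mult_minus_right p_integral_uminus)

lemma qcong_diff: "qcong p k x y \<Longrightarrow> qcong p k u v \<Longrightarrow> qcong p k (x - u) (y - v)"
  using qcong_add[of k x y "- u" "- v"] qcong_uminus by simp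

lemma qcong_p_integral: "qcong p k x y \<Longrightarrow> p_integral p y \<Longrightarrow> p_integral p x"
  unfolding qcong_iff
  by (metis diff_add_cancel p_integral_add p_integral_mult p_integral_power p_integral_of_nat)

lemma qcong_mult_left: "qcong p k x y \<Longrightarrow> p_integral p c \<Longrightarrow> qcong p k (c * x) (c * y)"
  unfolding qcong_iff by (metis right_diff_distrib mult.left_commute p_integral_mult)

lemma qcong_mult:
  assumes "qcong p k x y" "qcong p k u v" "p_integral p y" "p_integral p v"
  shows "qcong p k (x * u) (y * v)"
proof -
  have "qcong p k (x * u) (x * v)" using assms qcong_mult_left qcong_p_integral by blast
  moreover have "qcong p k (v * x) (v * y)" using assms qcong_mult_left by blast
  ultimately show ?thesis by (simp add: mult.commute qcong_trans)
qed

lemma qcong_power: "qcong p k x y \<Longrightarrow> p_integral p y \<Longrightarrow> qcong p k (x ^ n) (y ^ n)"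
  by (induction n) (auto intro: qcong_mult)

lemma qcong_sum: "(\<And>i. i \<in> A \<Longrightarrow> qcong p k (f i) (g i)) \<Longrightarrow> qcong p k (sum f A) (sum g A)"
  by (induction A rule: infinite_finite_induct) (auto intro: qcong_add)

lemma qcong_prod:
  "(\<And>i. i \<in> A \<Longrightarrow> qcong p k (f i) (g i)) \<Longrightarrow> (\<And>i. i \<in> A \<Longrightarrow> p_integral p (g i))
   \<Longrightarrow> qcong p k (prod f A) (prod g A)"
  by (induction A rule: infinite_finite_induct) (auto intro!: qcong_mult p_integral_prod)

lemma qcong_mono: "qcong p k x y \<Longrightarrow> j \<le> k \<Longrightarrow> qcong p j x y"
  unfolding qcong_iff
proof (elim exE conjE)
  fix z assume "p_integral p z" "x - y = P ^ k * z" "j \<le> k"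
  then show "\<exists>w. p_integral p w \<and> x - y = P ^ j * w"
    by (intro exI[of _ "P ^ (k - j) * z"] conjI p_integral_mult p_integral_power p_integral_of_nat)
      (auto simp flip: power_add mult.assoc)
qed

lemma qcong_mult_p_power: "qcong p k x y \<Longrightarrow> qcong p (k + j) (P ^ j * x) (P ^ j * y)"
  unfolding qcong_iff by (metis mult.left_commute power_add right_diff_distrib mult.commute)

lemma qcong_p_multiple: "p_integral p z \<Longrightarrow> qcong p k (P ^ k * z + y) y"
  unfolding qcong_iff by auto

lemma qcong_of_int: "int p ^ k dvd (a - b) \<Longrightarrow> qcong p k (of_int a) (of_int b)"
  unfolding qcong_iff dvd_def by (metis of_int_diff of_int_mult of_int_of_nat_eq of_int_power p_integral_of_int)

lemma qcong_pochhammer: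
  assumes "qcong p k x y" "p_integral p y"
  shows "qcong p k (pochhammer x n) (pochhammer y n)"
  unfolding pochhammer_prod using assms by (intro qcong_prod qcong_add qcong_refl) auto

lemma qcong_third_imp_dvd:
  assumes "qcong p k (of_nat n) (1 / 3)"
  shows "int p ^ k dvd 3 * int n - 1"
proof -
  obtain a b where ab: "\<not> int p dvd b" "of_int b * (of_nat n - 1 / 3) = of_int (int p ^ k) * (of_int a :: rat)"
    using assms unfolding qcong_def by auto
  have "(of_int (b * (3 * int n - 1)) :: rat) = 3 * (of_int b * (of_nat n - 1 / 3))"
    by (simp add: algebra_simps)
  also have "\<dots> = of_int (int p ^ k * (3 * a))" using ab(2) by simp
  finally have "int p ^ k dvd b * (3 * int n - 1)"
    by (simp only: of_int_eq_iff) simp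
  moreover have "coprime (int p ^ k) b"
    using ab(1) prime by (simp add: prime_imp_coprime prime_nat_int_transfer)
  ultimately show ?thesis by (simp add: coprime_dvd_mult_right_iff)
qed

end

locale prime_ge_5 = prime_localization +
  assumes ge_5: "5 \<le> p"
begin

lemma not_dvd_2: "\<not> p dvd 2" and not_dvd_3: "\<not> p dvd 3"
  using ge_5 by (auto dest: dvd_imp_le)

lemma p_integral_half [intro]: "p_integral p x \<Longrightarrow> p_integral p (x / 2)"
  using p_integral_divide_of_nat[of x 2] not_dvd_2 by simp

lemma p_integral_third [intro]: "p_integral p x \<Longrightarrow> p_integral p (x / 3)"
  using p_integral_divide_of_nat[of x 3] not_dvd_3 by simp

lemmas p_integral_simps [simp] =
  p_integral_add p_integral_mult p_integral_diff p_integral_uminus p_integral_power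
  p_integral_half p_integral_third

subsection \<open>Second-order expansions\<close>

definition second_order :: "rat \<Rightarrow> rat \<Rightarrow> rat" where
  "second_order x y = 1 + P * x + P ^ 2 * y"

lemma p_integral_second_order [intro]:
  "p_integral p x \<Longrightarrow> p_integral p y \<Longrightarrow> p_integral p (second_order x y)"
  unfolding second_order_def by simp

lemma second_order_mult:
  assumes "qcong p 3 X (second_order x y)" "qcong p 3 Y (second_order u v)"
    and "p_integral p x" "p_integral p y" "p_integral p u" "p_integral p v"
  shows "qcong p 3 (X * Y) (second_order (x + u) (y + v + x * u))"
proof -
  have "qcong p 3 (X * Y) (second_order x y * second_order u v)"
    using assms by (intro qcong_mult) auto
  also have "second_order x y * second_order u v
      = P ^ 3 * (x * v + y * u + P * y * v) + second_order (x + u) (y + v + x * u)"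
    unfolding second_order_def by (simp add: algebra_simps power2_eq_square power3_eq_cube)
  also have "qcong p 3 \<dots> (second_order (x + u) (y + v + x * u))"
    using assms by (intro qcong_p_multiple) simp
  finally show ?thesis .
qed

lemma second_order_power:
  assumes "qcong p 3 X (second_order x y)" "p_integral p x" "p_integral p y"
  shows "qcong p 3 (X ^ n)
    (second_order (of_nat n * x) (of_nat n * y + (of_nat n * (of_nat n - 1) / 2) * x ^ 2))"
proof (induction n)
  case 0
  then show ?case by (simp add: second_order_def)
next
  case (Suc n)
  have "qcong p 3 (X ^ n * X) (second_order (of_nat n * x + x)
      (of_nat n * y + (of_nat n * (of_nat n - 1) / 2) * x ^ 2 + y + of_nat n * x * x))"
    using Suc assms by (intro second_order_mult) auto
  moreover have "of_nat n * x + x = of_nat (Suc n) * x"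
    by (simp add: algebra_simps)
  moreover have "of_nat n * y + (of_nat n * (of_nat n - 1) / 2) * x ^ 2 + y + of_nat n * x * x
      = of_nat (Suc n) * y + (of_nat (Suc n) * (of_nat (Suc n) - 1) / 2) * x ^ 2"
    by (simp add: field_simps power2_eq_square)
  ultimately show ?case by (simp only: power_Suc2)
qed

lemma second_order_cong:
  assumes "qcong p 2 x (x' + P * z)" "qcong p 1 (y + z) y'"
  shows "qcong p 3 (second_order x y) (second_order x' y')"
proof -
  obtain a where a: "p_integral p a" "x - (x' + P * z) = P ^ 2 * a"
    using assms(1) qcong_iff by blast
  obtain b where b: "p_integral p b" "y + z - y' = P * b"
    using assms(2) qcong_iff by auto
  have "second_order x y - second_order x' y' = P * (x - (x' + P * z)) + P ^ 2 * (y + z - y')"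
    unfolding second_order_def by (simp add: algebra_simps power2_eq_square)
  also have "\<dots> = P ^ 3 * (a + b)"
    unfolding a(2) b(2) by (simp add: algebra_simps power2_eq_square power3_eq_cube)
  finally show ?thesis unfolding qcong_iff using a(1) b(1) by blast
qed

lemma prod_one_plus_p_expansion:
  assumes "finite A" "\<And>i. i \<in> A \<Longrightarrow> p_integral p (f i)"
  shows "qcong p 3 (\<Prod>i\<in>A. 1 + P * f i)
    (second_order (sum f A) (((sum f A) ^ 2 - (\<Sum>i\<in>A. (f i) ^ 2)) / 2))"
  using assms
proof (induction A rule: finite_induct)
  case empty
  then show ?case by (simp add: second_order_def)
next
  case (insert a A)
  let ?x = "sum f A" and ?y = "((sum f A) ^ 2 - (\<Sum>i\<in>A. (f i) ^ 2)) / 2"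
  have "p_integral p ?x" "p_integral p ?y"
    using insert by (auto intro!: p_integral_sum)
  then have "qcong p 3 (second_order (f a) 0 * (\<Prod>i\<in>A. 1 + P * f i))
      (second_order (f a + ?x) (0 + ?y + f a * ?x))"
    using insert by (intro second_order_mult) auto
  moreover have "(\<Prod>i\<in>insert a A. 1 + P * f i) = second_order (f a) 0 * (\<Prod>i\<in>A. 1 + P * f i)"
    "sum f (insert a A) = f a + ?x" "(\<Sum>i\<in>insert a A. (f i) ^ 2) = (f a) ^ 2 + (\<Sum>i\<in>A. (f i) ^ 2)"
    using insert by (simp_all add: second_order_def)
  moreover have "0 + ?y + f a * ?x = ((f a + ?x) ^ 2 - ((f a) ^ 2 + (\<Sum>i\<in>A. (f i) ^ 2))) / 2"
    by (simp add: algebra_simps power2_eq_square add_divide_distrib diff_divide_distrib)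
  ultimately show ?case by (simp only:)
qed

lemma prod_shift_expansion:
  fixes g :: "'a \<Rightarrow> nat"
  assumes "finite A" "\<And>i. i \<in> A \<Longrightarrow> \<not> p dvd g i" "p_integral p c"
  defines "s \<equiv> \<Sum>i\<in>A. 1 / of_nat (g i)"
  shows "qcong p 3 (\<Prod>i\<in>A. of_nat (g i) + P * c)
    ((\<Prod>i\<in>A. of_nat (g i)) * second_order (c * s) (c ^ 2 * (s ^ 2 - (\<Sum>i\<in>A. 1 / of_nat (g i) ^ 2)) / 2))"
proof -
  have g0: "g i \<noteq> 0" if "i \<in> A" for i
    using assms(2)[OF that] by (metis dvd_0_right)
  have "(\<Prod>i\<in>A. of_nat (g i) + P * c) = (\<Prod>i\<in>A. of_nat (g i)) * (\<Prod>i\<in>A. 1 + P * (c / of_nat (g i)))"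
    by (subst prod.distrib[symmetric], rule prod.cong) (use g0 in \<open>auto simp: field_simps\<close>)
  also have "qcong p 3 \<dots> ((\<Prod>i\<in>A. of_nat (g i)) * second_order (\<Sum>i\<in>A. c / of_nat (g i))
      (((\<Sum>i\<in>A. c / of_nat (g i)) ^ 2 - (\<Sum>i\<in>A. (c / of_nat (g i)) ^ 2)) / 2))"
    using assms by (intro qcong_mult_left prod_one_plus_p_expansion) auto
  also have "(\<Sum>i\<in>A. c / of_nat (g i)) = c * s"
    unfolding s_def by (simp add: sum_distrib_left)
  also have "(\<Sum>i\<in>A. (c / of_nat (g i)) ^ 2) = c ^ 2 * (\<Sum>i\<in>A. 1 / of_nat (g i) ^ 2)"
    by (simp add: sum_distrib_left power_divide)
  finally show ?thesis by (simp add: power_mult_distrib right_diff_distrib)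
qed

subsection \<open>Harmonic sums and Wilson's theorem\<close>

lemma inverse_qcong_of_mod_eq:
  assumes "a mod p = b mod p" "\<not> p dvd a" "\<not> p dvd b"
  shows "qcong p 1 (1 / of_nat a) (1 / of_nat b)"
proof -
  define qa qb r where "qa = a div p" and "qb = b div p" and "r = a mod p"
  have a: "a = p * qa + r" unfolding qa_def r_def by simp
  have b: "b = p * qb + r" unfolding qb_def r_def assms(1) by simp
  have "a \<noteq> 0" "b \<noteq> 0" using assms(2,3) by (metis dvd_0_right)+
  then have "1 / of_nat a - 1 / of_nat b = (of_nat b - of_nat a) / (of_nat (a * b) :: rat)"
    by (simp add: field_simps)
  also have "(of_nat b :: rat) - of_nat a = P * (of_nat qb - of_nat qa)"
    unfolding a b by (simp add: algebra_simps)
  finally have "1 / of_nat a - 1 / of_nat b = P ^ 1 * ((of_nat qb - of_nat qa) / of_nat (a * b))"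
    by simp
  moreover have "\<not> p dvd (a * b)" using assms prime by (simp add: prime_dvd_mult_iff)
  then have "p_integral p ((of_nat qb - of_nat qa) / of_nat (a * b))"
    by (intro p_integral_divide_of_nat) auto
  ultimately show ?thesis unfolding qcong_iff by blast
qed

lemma sum_inverse_squares_qcong_0: "qcong p 1 (\<Sum>r = 1..<p. 1 / of_nat r ^ 2) 0"
proof -
  let ?A = "{1..<p}" and ?f = "\<lambda>r::nat. 1 / of_nat r ^ 2 :: rat" and ?g = "\<lambda>r. (2 * r) mod p"
  have coprime: "coprime 2 p"
    using prime_imp_coprime[OF prime not_dvd_2] by (simp add: coprime_commute)
  have not_dvd: "\<not> p dvd 2 * r" if "r \<in> ?A" for r
    using that prime not_dvd_2 by (auto simp: prime_dvd_mult_iff dest: dvd_imp_le)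
  have "inj_on ?g ?A"
  proof
    fix r s assume "r \<in> ?A" "s \<in> ?A" "?g r = ?g s"
    then show "r = s"
      using cong_mult_lcancel_nat[OF coprime] by (auto simp: cong_def intro: cong_less_modulus_unique_nat)
  qed
  moreover have "?g r \<in> ?A" if "r \<in> ?A" for r
    using not_dvd[OF that] prime_gt_0_nat[OF prime] by (auto simp: dvd_eq_mod_eq_0)
  then have "?g ` ?A \<subseteq> ?A" by blast
  ultimately have permutes: "?g ` ?A = ?A" "inj_on ?g ?A"
    by (simp_all add: endo_inj_surj)
  \<comment> \<open>doubling permutes the nonzero residues, so the sum is congruent to a quarter of itself\<close>
  have "sum ?f ?A = (\<Sum>r\<in>?A. ?f (?g r))"
    using sum.reindex[OF permutes(2), of ?f] permutes(1) by simp
  also have "qcong p 1 \<dots> (\<Sum>r\<in>?A. ?f (2 * r))"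
  proof (rule qcong_sum)
    fix r assume r: "r \<in> ?A"
    have "qcong p 1 (1 / of_nat (?g r)) (1 / of_nat (2 * r))"
      using not_dvd[OF r] by (intro inverse_qcong_of_mod_eq) (auto simp: dvd_eq_mod_eq_0)
    then have "qcong p 1 ((1 / of_nat (?g r)) ^ 2) ((1 / of_nat (2 * r)) ^ 2)"
      by (rule qcong_power) (rule p_integral_inverse_of_nat[OF not_dvd[OF r]])
    then show "qcong p 1 (?f (?g r)) (?f (2 * r))" by (simp add: power_one_over)
  qed
  also have "(\<Sum>r\<in>?A. ?f (2 * r)) = sum ?f ?A / 4"
    by (simp add: sum_divide_distrib power_mult_distrib mult.commute)
  finally have "qcong p 1 (sum ?f ?A - sum ?f ?A / 4) (sum ?f ?A / 4 - sum ?f ?A / 4)"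
    by (intro qcong_diff) simp_all
  then have "qcong p 1 (4 / 3 * (sum ?f ?A - sum ?f ?A / 4)) (4 / 3 * 0)"
    using p_integral_third[of 4] by (intro qcong_mult_left) simp_all
  then show ?thesis by simp
qed

lemma inverse_p_minus:
  assumes "0 < x" "x < p"
  shows "qcong p 2 (1 / (P - of_nat x)) (- 1 / of_nat x - P / of_nat x ^ 2)"
proof -
  have "(of_nat x :: rat) \<noteq> 0" "P - of_nat x \<noteq> 0" using assms by auto
  then have "1 / (P - of_nat x)
      = P ^ 2 * (1 / (of_nat x ^ 2 * (P - of_nat x))) + (- 1 / of_nat x - P / of_nat x ^ 2)"
    by (simp add: field_simps power2_eq_square)
  also have "of_nat x ^ 2 * (P - of_nat x) = of_nat (x ^ 2 * (p - x))"
    using assms by (simp add: of_nat_diff)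
  finally have eq: "1 / (P - of_nat x)
      = P ^ 2 * (1 / of_nat (x ^ 2 * (p - x))) + (- 1 / of_nat x - P / of_nat x ^ 2)" .
  have "\<not> p dvd x ^ 2 * (p - x)"
    using assms prime by (auto simp: prime_dvd_mult_iff prime_dvd_power_iff dest: dvd_imp_le)
  then show ?thesis
    unfolding eq by (intro qcong_p_multiple p_integral_inverse_of_nat)
qed

lemma inverse_p_minus_squared:
  assumes "0 < x" "x < p"
  shows "qcong p 1 (1 / (P - of_nat x) ^ 2) (1 / of_nat x ^ 2)"
proof -
  have "(of_nat x :: rat) \<noteq> 0" "P - of_nat x \<noteq> 0" using assms by auto
  then have "1 / (P - of_nat x) ^ 2
      = (of_nat x ^ 2 - (P - of_nat x) ^ 2) / (of_nat x ^ 2 * (P - of_nat x) ^ 2) + 1 / of_nat x ^ 2"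
    by (simp add: field_simps)
  also have "of_nat x ^ 2 - (P - of_nat x) ^ 2 = P ^ 1 * (2 * of_nat x - P)"
    by (simp add: algebra_simps power2_eq_square)
  also have "of_nat x ^ 2 * (P - of_nat x) ^ 2 = of_nat (x ^ 2 * (p - x) ^ 2)"
    using assms by (simp add: of_nat_diff)
  finally have eq: "1 / (P - of_nat x) ^ 2
      = P ^ 1 * ((2 * of_nat x - P) / of_nat (x ^ 2 * (p - x) ^ 2)) + 1 / of_nat x ^ 2"
    by simp
  have "\<not> p dvd x ^ 2 * (p - x) ^ 2"
    using assms prime by (auto simp: prime_dvd_mult_iff prime_dvd_power_iff dest: dvd_imp_le)
  then show ?thesis
    unfolding eq by (intro qcong_p_multiple p_integral_divide_of_nat) auto
qed

lemma sum_reflect_p: "(\<Sum>r = 1..<p. f (p - r)) = (\<Sum>r = 1..<p. f r)"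
  using sum.atLeastLessThan_rev[of f 1 p] by simp

lemma wolstenholme: "qcong p 2 (\<Sum>r = 1..<p. 1 / of_nat r) 0"
proof -
  let ?H = "\<Sum>r = 1..<p. 1 / of_nat r :: rat" and ?T = "\<Sum>r = 1..<p. 1 / of_nat r ^ 2 :: rat"
  have "?H = (\<Sum>r = 1..<p. 1 / (P - of_nat r))"
    using sum_reflect_p[of "\<lambda>r. 1 / of_nat r :: rat"] by (simp add: of_nat_diff)
  also have "qcong p 2 \<dots> (\<Sum>r = 1..<p. - 1 / of_nat r - P / of_nat r ^ 2)"
    by (intro qcong_sum inverse_p_minus) auto
  also have "(\<Sum>r = 1..<p. - 1 / of_nat r - P / of_nat r ^ 2) = - ?H - P * ?T"
    by (simp add: sum_subtractf sum_negf sum_distrib_left)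
  finally have "qcong p 2 (?H + ?H) (- ?H - P * ?T + ?H)"
    by (intro qcong_add) simp_all
  also have "- ?H - P * ?T + ?H = - (P ^ 1 * ?T)" by simp
  also have "qcong p 2 \<dots> (- (P ^ 1 * 0))"
    using qcong_mult_p_power[OF sum_inverse_squares_qcong_0, of 1] by (intro qcong_uminus) (simp add: numeral_2_eq_2)
  finally have "qcong p 2 (1 / 2 * (?H + ?H)) (1 / 2 * 0)"
    by (intro qcong_mult_left) simp_all
  then show ?thesis by simp
qed

lemma fact_eq_prod: "(fact (p - 1) :: rat) = (\<Prod>r = 1..<p. of_nat r)"
  using prime_gt_0_nat[OF prime] by (simp add: fact_prod atLeastLessThanSuc_atLeastAtMost[symmetric])

lemma p_integral_fact [simp]: "p_integral p (fact n)"
  using p_integral_of_nat[of "fact n"] by simp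

lemma p_integral_inverse_fact: "p_integral p (1 / fact (p - 1))"
  using p_integral_inverse_of_nat[of "fact (p - 1)"] prime_dvd_fact_iff[OF prime] ge_5 by simp

lemma wilson_qcong: "qcong p 1 (fact (p - 1)) (- 1)"
proof -
  have "[int (fact (p - 1)) = - 1] (mod int p)"
    using wilson_theorem[OF prime] by (simp add: of_nat_fact)
  then have "qcong p 1 (of_int (int (fact (p - 1)))) (of_int (- 1))"
    by (intro qcong_of_int) (simp add: cong_iff_dvd_diff)
  then show ?thesis by simp
qed

lemma block_qcong_fact: "qcong p 3 (\<Prod>r = 1..<p. of_nat (j * p + r)) (fact (p - 1))"
proof -
  let ?H = "\<Sum>r = 1..<p. 1 / of_nat r :: rat" and ?T = "\<Sum>r = 1..<p. 1 / of_nat r ^ 2 :: rat"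
  have "(\<Prod>r = 1..<p. of_nat (j * p + r) :: rat) = (\<Prod>r = 1..<p. of_nat r + P * of_nat j)"
    by (simp add: algebra_simps)
  also have "qcong p 3 \<dots> (fact (p - 1) * second_order (of_nat j * ?H) (of_nat j ^ 2 * (?H ^ 2 - ?T) / 2))"
  proof -
    have "\<not> p dvd r" if "r \<in> {1..<p}" for r
      using that by (auto dest: dvd_imp_le)
    then show ?thesis
      using prod_shift_expansion[of "{1..<p}" id "of_nat j"] unfolding fact_eq_prod by simp
  qed
  also have "qcong p 3 \<dots> (fact (p - 1) * second_order 0 0)"
  proof (intro qcong_mult_left second_order_cong)
    show "qcong p 2 (of_nat j * ?H) (0 + P * 0)"
      using qcong_mult_left[OF wolstenholme, of "of_nat j"] by simp
    have "qcong p 1 (of_nat j ^ 2 * (?H ^ 2 - ?T) / 2) (of_nat j ^ 2 * (0 ^ 2 - 0) / 2)"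
      using qcong_mono[OF wolstenholme] sum_inverse_squares_qcong_0
      by (intro qcong_mult_left[where c = "1 / 2", simplified] qcong_mult_left qcong_diff qcong_power) auto
    then show "qcong p 1 (of_nat j ^ 2 * (?H ^ 2 - ?T) / 2 + 0) 0" by simp
  qed simp
  finally show ?thesis by (simp add: second_order_def)
qed

lemma qcong_power_p:
  assumes "qcong p k x 1" "1 \<le> k" "p_integral p x"
  shows "qcong p (k + 1) (x ^ p) 1"
proof -
  obtain z where z: "p_integral p z" "x - 1 = P ^ k * z"
    using assms(1) qcong_iff by auto
  have "qcong p 1 (\<Sum>i<p. x ^ i) (\<Sum>i<p. 1 ^ i)"
    using assms by (intro qcong_sum qcong_power qcong_mono[OF assms(1)]) auto
  also have "(\<Sum>i<p. 1 ^ i) = P ^ 1 * 1 + 0" by simp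
  also have "qcong p 1 \<dots> 0" by (rule qcong_p_multiple) simp
  finally obtain w where w: "p_integral p w" "(\<Sum>i<p. x ^ i) = P * w"
    using qcong_iff by auto
  have "x ^ p - 1 = (x - 1) * (\<Sum>i<p. x ^ i)" by (rule power_diff_1_eq)
  also have "\<dots> = P ^ (k + 1) * (z * w)" using z w by (simp add: algebra_simps)
  finally show ?thesis unfolding qcong_iff using z w by auto
qed

lemma qcong_power_p_squared:
  assumes "qcong p 1 x 1" "p_integral p x"
  shows "qcong p 3 (x ^ p\<^sup>2) 1"
proof -
  have "qcong p 2 (x ^ p) 1"
    using qcong_power_p[OF assms(1) _ assms(2)] by (simp add: numeral_2_eq_2)
  then have "qcong p (2 + 1) ((x ^ p) ^ p) 1"
    using assms(2) by (intro qcong_power_p) auto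
  then show ?thesis by (simp add: power_mult[symmetric] power2_eq_square)
qed

end

section \<open>Morita's $p$-adic Gamma function at natural numbers\<close>

context prime_localization
begin

lemma padic_gamma_nat_eq_blocks:
  assumes "0 < r" "r \<le> p"
  shows "(of_int (padic_gamma_nat p (q * p + r)) :: rat) = (- 1) ^ (q * p + r) *
    ((\<Prod>j<q. \<Prod>s = 1..<p. of_nat (j * p + s)) * (\<Prod>s = 1..<r. of_nat (q * p + s)))"
proof -
  define u where "u k = (if \<not> p dvd k then k else 1)" for k
  have gamma: "padic_gamma_nat p n = (- 1) ^ n * int (\<Prod>k<n. u k)" for n
  proof -
    have "(\<Prod>k<n. u k) = (\<Prod>k\<in>{k \<in> {..<n}. \<not> p dvd k}. k)"
      unfolding u_def by (rule prod.inter_filter[symmetric]) simp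
    moreover have "{k \<in> {..<n}. \<not> p dvd k} = {k. 1 \<le> k \<and> k < n \<and> \<not> p dvd k}"
      by (auto simp: Suc_le_eq intro: Nat.gr0I)
    ultimately show ?thesis
      unfolding padic_gamma_nat_def by (simp add: of_nat_prod)
  qed
  have segment: "(\<Prod>s<t. u (j * p + s)) = (\<Prod>s = 1..<t. j * p + s)" if "0 < t" "t \<le> p" for j t
  proof -
    have "\<not> p dvd j * p + s" if "s \<in> {1..<t}" for s
      using that \<open>t \<le> p\<close> by (auto simp: dvd_add_right_iff dest: dvd_imp_le)
    moreover have "{..<t} = insert 0 {1..<t}" using \<open>0 < t\<close> by auto
    ultimately show ?thesis by (simp add: u_def)
  qed
  have blocks: "(\<Prod>k<q * p. u k) = (\<Prod>j<q. \<Prod>s = 1..<p. j * p + s)" for q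
  proof (induction q)
    case (Suc q)
    have "(\<Prod>k<Suc q * p. u k) = (\<Prod>k<q * p + p. u k)"
      by (simp add: add.commute)
    also have "\<dots> = (\<Prod>k<q * p. u k) * (\<Prod>s<p. u (q * p + s))"
      by (rule prod_lessThan_add)
    finally have "(\<Prod>k<Suc q * p. u k) = (\<Prod>k<q * p. u k) * (\<Prod>s<p. u (q * p + s))" .
    then show ?case
      using Suc segment[of p q] prime_gt_0_nat[OF prime] by simp
  qed simp
  have "(\<Prod>k<q * p + r. u k) = (\<Prod>j<q. \<Prod>s = 1..<p. j * p + s) * (\<Prod>s = 1..<r. q * p + s)"
    using assms by (simp add: prod_lessThan_add blocks segment)
  then show ?thesis
    unfolding gamma by (simp add: of_nat_prod)
qed

end

context prime_ge_5
begin

lemma padic_gamma_nat_power_6_qcong: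
  assumes "0 < r" "r \<le> p"
  shows "qcong p 3 (of_int (padic_gamma_nat p (q * p + r)) ^ 6)
    (fact (p - 1) ^ (6 * q) * (\<Prod>s = 1..<r. of_nat (q * p + s)) ^ 6)"
proof -
  have "((- 1 :: rat) ^ (q * p + r)) ^ 6 = 1"
    by (simp flip: power_mult add: mult.commute[of _ 6] power_mult)
  then have "(of_int (padic_gamma_nat p (q * p + r)) :: rat) ^ 6
      = ((\<Prod>j<q. \<Prod>s = 1..<p. of_nat (j * p + s)) * (\<Prod>s = 1..<r. of_nat (q * p + s))) ^ 6"
    unfolding padic_gamma_nat_eq_blocks[OF assms] by (simp add: power_mult_distrib)
  also have "qcong p 3 \<dots> ((fact (p - 1) ^ q * (\<Prod>s = 1..<r. of_nat (q * p + s))) ^ 6)"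
  proof (intro qcong_power qcong_mult qcong_refl)
    show "qcong p 3 (\<Prod>j<q. \<Prod>s = 1..<p. of_nat (j * p + s)) (fact (p - 1) ^ q)"
      using qcong_prod[of "{..<q}", OF block_qcong_fact] by simp
  qed (auto intro!: p_integral_prod)
  finally show ?thesis by (simp add: power_mult_distrib power_mult[symmetric] mult.commute)
qed

lemma mod_eq_of_three_times_cong_1:
  assumes "int p dvd 3 * int n - 1" "[3 * r = 1] (mod p)" "r < p"
  shows "n mod p = r"
proof -
  have "[3 * n = 1] (mod p)"
    using assms(1) by (simp add: cong_iff_dvd_diff flip: cong_int_iff)
  moreover have "[3 * (n mod p) = 3 * n] (mod p)"
    by (simp add: cong_def mod_mult_right_eq)
  ultimately have "[3 * (n mod p) = 3 * r] (mod p)"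
    using assms(2) by (meson cong_sym cong_trans)
  then have "[n mod p = r] (mod p)"
    using prime_imp_coprime[OF prime not_dvd_3] by (simp add: coprime_commute cong_mult_lcancel_nat)
  then show ?thesis
    using assms(3) prime_gt_0_nat[OF prime] by (simp add: cong_def)
qed

lemma fact_power_qcong:
  assumes "3 * q + 2 = p\<^sup>2 * k"
  shows "qcong p 3 (fact (p - 1) ^ (6 * q)) (1 / fact (p - 1) ^ 4)"
proof -
  have "qcong p 1 ((fact (p - 1) ^ 2) ^ k) (((- 1) ^ 2) ^ k)"
    using wilson_qcong by (intro qcong_power) auto
  then have "qcong p 3 (((fact (p - 1) ^ 2) ^ k) ^ p\<^sup>2) 1"
    by (intro qcong_power_p_squared) auto
  moreover have "((fact (p - 1) ^ 2) ^ k) ^ p\<^sup>2 = fact (p - 1) ^ (6 * q) * (fact (p - 1) :: rat) ^ 4"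
  proof -
    have "2 * k * p\<^sup>2 = 2 * (p\<^sup>2 * k)" by simp
    also have "\<dots> = 6 * q + 4" unfolding assms[symmetric] by simp
    finally have exponent: "2 * k * p\<^sup>2 = 6 * q + 4" .
    have "((fact (p - 1) ^ 2) ^ k) ^ p\<^sup>2 = (fact (p - 1) :: rat) ^ (2 * k * p\<^sup>2)"
      by (simp only: power_mult)
    then show ?thesis unfolding exponent power_add .
  qed
  ultimately have "qcong p 3 (fact (p - 1) ^ (6 * q) * fact (p - 1) ^ 4) 1"
    by simp
  then have "qcong p 3 (1 / fact (p - 1) ^ 4 * (fact (p - 1) ^ (6 * q) * fact (p - 1) ^ 4))
      (1 / fact (p - 1) ^ 4 * 1)"
    using p_integral_power[OF p_integral_inverse_fact, of 4]
    by (intro qcong_mult_left) (simp_all add: power_one_over)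
  then show ?thesis by simp
qed

end

section \<open>The case $p \equiv 1 \pmod 3$\<close>

locale prime_1_mod_3 = prime_ge_5 +
  fixes m :: nat
  assumes p_eq: "p = 3 * m + 1"
begin

definition progression_prod :: "nat \<Rightarrow> rat" where
  "progression_prod r = (\<Prod>j<m. of_nat (3 * j + r))"

definition progression_sum :: "nat \<Rightarrow> nat \<Rightarrow> rat" where
  "progression_sum e r = (\<Sum>j<m. 1 / of_nat (3 * j + r) ^ e)"

definition shift_ratio :: "rat \<Rightarrow> nat \<Rightarrow> rat" where
  "shift_ratio c r = (\<Prod>j<m. 1 + P * (c / of_nat (3 * j + r)))"

text \<open>The partial block of \<open>\<Gamma>\<^sub>p(q p + 2m + 1)\<close> in the limit \<open>q p \<rightarrow> -2p/3\<close>.\<close>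

definition gamma_tail :: rat where
  "gamma_tail = (\<Prod>s = 1..<2 * m + 1. of_nat s - 2 * P / 3)"

lemma progression_below_p: "j < m \<Longrightarrow> 0 < r \<Longrightarrow> r \<le> 3 \<Longrightarrow> 0 < 3 * j + r \<and> 3 * j + r < p"
  using p_eq by auto

lemma p_integral_inverse_progression:
  "j < m \<Longrightarrow> 0 < r \<Longrightarrow> r \<le> 3 \<Longrightarrow> p_integral p (1 / of_nat (3 * j + r) ^ e)"
  using p_integral_power[OF p_integral_inverse_of_nat_less, of "3 * j + r" e] progression_below_p
  by (simp add: power_one_over)

lemma p_integral_progression_sum: "0 < r \<Longrightarrow> r \<le> 3 \<Longrightarrow> p_integral p (progression_sum e r)"
  unfolding progression_sum_def by (intro p_integral_sum p_integral_inverse_progression) auto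

lemma p_integral_progression_prod: "p_integral p (progression_prod r)"
  unfolding progression_prod_def by (intro p_integral_prod) simp

lemma p_integral_inverse_progression_prod:
  assumes "0 < r" "r \<le> 3"
  shows "p_integral p (1 / progression_prod r)"
proof -
  have "\<not> p dvd 3 * j + r" if "j < m" for j
    using progression_below_p[OF that assms] by (auto dest: dvd_imp_le)
  then show ?thesis
    unfolding progression_prod_def by (intro p_integral_inverse_prod) simp
qed

lemma progression_prod_nonzero: "0 < r \<Longrightarrow> progression_prod r \<noteq> 0"
  unfolding progression_prod_def by auto

lemma prod_progression_shift:
  assumes "0 < r"
  shows "(\<Prod>j<m. of_nat (3 * j + r) + c * P) = progression_prod r * shift_ratio c r"
  unfolding progression_prod_def shift_ratio_def prod.distrib[symmetric]
  by (rule prod.cong) (use assms in \<open>auto simp: field_simps\<close>)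

lemma shift_ratio_expansion:
  assumes "p_integral p c" "0 < r" "r \<le> 3"
  defines "a \<equiv> progression_sum 1 r"
  shows "qcong p 3 (shift_ratio c r) (second_order (c * a) (c ^ 2 * (a ^ 2 - progression_sum 2 r) / 2))"
proof -
  have "qcong p 3 (shift_ratio c r) (second_order (\<Sum>j<m. c / of_nat (3 * j + r))
      (((\<Sum>j<m. c / of_nat (3 * j + r)) ^ 2 - (\<Sum>j<m. (c / of_nat (3 * j + r)) ^ 2)) / 2))"
    unfolding shift_ratio_def using assms p_integral_inverse_progression[of _ r 1]
    by (intro prod_one_plus_p_expansion) (auto simp: p_integral_mult[of c "1 / _", simplified])
  moreover have "(\<Sum>j<m. c / of_nat (3 * j + r)) = c * a"
    unfolding a_def progression_sum_def by (simp add: sum_distrib_left)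
  moreover have "(\<Sum>j<m. (c / of_nat (3 * j + r)) ^ 2) = c ^ 2 * progression_sum 2 r"
    unfolding progression_sum_def by (simp add: sum_distrib_left power_divide)
  ultimately show ?thesis by (simp add: power_mult_distrib right_diff_distrib)
qed

lemma fact_eq_prod_lessThan: "(fact (p - 1) :: rat) = (\<Prod>k<3 * m. of_nat (Suc k))"
  using p_eq by (simp add: fact_prod_Suc of_nat_prod atLeast0LessThan)

lemma fact_eq_progression_prods: "fact (p - 1) = progression_prod 1 * progression_prod 2 * progression_prod 3"
proof -
  have "(fact (p - 1) :: rat) = (\<Prod>k<3 * m. of_nat (Suc k))"
    by (rule fact_eq_prod_lessThan)
  also have "\<dots> = (\<Prod>j<m. of_nat (3 * j + 1) * of_nat (3 * j + 2) * of_nat (3 * j + 3))"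
    by (subst prod_lessThan_3_mult) (simp add: algebra_simps)
  finally show ?thesis
    unfolding progression_prod_def by (simp only: prod.distrib)
qed

lemma three_power_eq_shift_ratios: "3 ^ (3 * m) = shift_ratio 1 2 * shift_ratio 2 1"
proof -
  have thirds: "3 * m = m + m + m" by simp
  have "3 ^ (3 * m) * fact (p - 1) = (\<Prod>k<3 * m. 3 * of_nat (Suc k) :: rat)"
    unfolding fact_eq_prod_lessThan prod.distrib by simp
  also have "\<dots> = (\<Prod>k<m. 3 * of_nat (Suc k)) * (\<Prod>k<m. 3 * of_nat (Suc (m + k)))
      * (\<Prod>k<m. 3 * of_nat (Suc (m + m + k)))"
    unfolding thirds by (simp only: prod_lessThan_add)
  also have "(\<Prod>k<m. 3 * of_nat (Suc k) :: rat) = progression_prod 3"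
    unfolding progression_prod_def by (rule prod.cong) auto
  also have "(\<Prod>k<m. 3 * of_nat (Suc (m + k)) :: rat) = (\<Prod>k<m. of_nat (3 * k + 2) + 1 * P)"
    by (rule prod.cong) (auto simp: p_eq)
  also have "(\<Prod>k<m. 3 * of_nat (Suc (m + m + k)) :: rat) = (\<Prod>k<m. of_nat (3 * k + 1) + 2 * P)"
    by (rule prod.cong) (auto simp: p_eq)
  finally have "3 ^ (3 * m) * fact (p - 1)
      = progression_prod 3 * (progression_prod 2 * shift_ratio 1 2) * (progression_prod 1 * shift_ratio 2 1)"
    by (simp only: prod_progression_shift zero_less_numeral zero_less_one)
  then show ?thesis
    unfolding fact_eq_progression_prods using progression_prod_nonzero[of 1] progression_prod_nonzero[of 2]
      progression_prod_nonzero[of 3] by (simp add: field_simps)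
qed

lemma progression_reflect:
  assumes "j < m"
  shows "(of_nat (3 * (m - Suc j) + 1) :: rat) = P - of_nat (3 * j + 3)"
    and "(of_nat (3 * (m - Suc j) + 2) :: rat) = P - of_nat (3 * j + 2)"
  using assms p_eq by (simp_all add: of_nat_diff)

lemma progression_prod_1_reflect: "progression_prod 1 = (- 1) ^ m * progression_prod 3 * shift_ratio (- 1) 3"
proof -
  have "progression_prod 1 = (\<Prod>j<m. of_nat (3 * (m - Suc j) + 1))"
    unfolding progression_prod_def by (rule prod.nat_diff_reindex[symmetric])
  also have "\<dots> = (\<Prod>j<m. (- 1) * of_nat (3 * j + 3) * (1 + P * (- 1 / of_nat (3 * j + 3))))"
  proof (rule prod.cong)
    fix j assume "j \<in> {..<m}"
    then have "j < m" by simp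
    then show "of_nat (3 * (m - Suc j) + 1)
        = (- 1) * of_nat (3 * j + 3) * (1 + P * (- 1 / of_nat (3 * j + 3)))"
      unfolding progression_reflect(1)[OF \<open>j < m\<close>] by (simp add: field_simps)
  qed simp
  finally show ?thesis
    unfolding progression_prod_def shift_ratio_def by (simp only: prod.distrib prod_constant card_lessThan)
qed

lemma gamma_tail_eq: "gamma_tail = (1 / 9) ^ m * progression_prod 1 * shift_ratio 1 1 * progression_prod 2"
proof -
  have P_eq: "P = 3 * of_nat m + 1" using p_eq by simp
  have lower: "of_nat (Suc (m - Suc j)) - 2 * P / 3
      = (- 1 / 3) * of_nat (3 * j + 1) * (1 + P * (1 / of_nat (3 * j + 1)))" if "j < m" for j
    using that unfolding P_eq by (simp add: of_nat_diff field_simps)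
  have upper: "of_nat (Suc (m + (m - Suc j))) - 2 * P / 3 = (- 1 / 3) * of_nat (3 * j + 2)"
    if "j < m" for j
    using that unfolding P_eq by (simp add: of_nat_diff field_simps)
  have "gamma_tail = (\<Prod>s = Suc 0..<Suc (m + m). of_nat s - 2 * P / 3)"
    unfolding gamma_tail_def mult_2 by simp
  also have "\<dots> = (\<Prod>i<m + m. of_nat (Suc i) - 2 * P / 3)"
    unfolding prod.shift_bounds_Suc_ivl atLeast0LessThan ..
  also have "\<dots> = (\<Prod>j<m. of_nat (Suc (m - Suc j)) - 2 * P / 3)
      * (\<Prod>j<m. of_nat (Suc (m + (m - Suc j))) - 2 * P / 3)"
    unfolding prod_lessThan_add
    by (simp only: prod.nat_diff_reindex[where g = "\<lambda>k. of_nat (Suc k) - 2 * P / 3"]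
        prod.nat_diff_reindex[where g = "\<lambda>k. of_nat (Suc (m + k)) - 2 * P / 3"])
  also have "\<dots> = (\<Prod>j<m. (- 1 / 3) * of_nat (3 * j + 1) * (1 + P * (1 / of_nat (3 * j + 1))))
      * (\<Prod>j<m. (- 1 / 3) * of_nat (3 * j + 2))"
    using lower upper by simp
  also have "\<dots> = ((- 1 / 3) ^ m * progression_prod 1 * shift_ratio 1 1) * ((- 1 / 3) ^ m * progression_prod 2)"
    unfolding progression_prod_def shift_ratio_def by (simp only: prod.distrib prod_constant card_lessThan)
  also have "\<dots> = ((- 1 / 3) * (- 1 / 3)) ^ m * progression_prod 1 * shift_ratio 1 1 * progression_prod 2"
    by (simp only: power_mult_distrib ac_simps)
  finally show ?thesis by simp
qed

lemma gamma_tail_ratio_eq: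
  "gamma_tail ^ 6 / fact (p - 1) ^ 4
    = (progression_prod 2 / progression_prod 3) ^ 2 / 3 ^ (12 * m) * (shift_ratio (- 1) 3 ^ 2 * shift_ratio 1 1 ^ 6)"
proof -
  define sgn :: rat where "sgn = (- 1) ^ m"
  have sgn: "sgn ^ 2 = 1" "sgn ^ 4 = 1" "sgn ^ 6 = 1"
    unfolding sgn_def by (simp_all flip: power_mult add: mult.commute[of m] power_mult)
  have "(1 / 9 :: rat) ^ m = 1 / 3 ^ (2 * m)"
    by (simp add: power_mult power_divide)
  moreover have "shift_ratio (- 1) 3 \<noteq> 0"
    using progression_prod_1_reflect progression_prod_nonzero[of 1] by auto
  ultimately show ?thesis
    unfolding gamma_tail_eq fact_eq_progression_prods progression_prod_1_reflect sgn_def[symmetric]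
    using progression_prod_nonzero[of 2] progression_prod_nonzero[of 3] sgn
    by (simp add: field_simps power_mult_distrib flip: power_mult)
qed

lemma progression_sum_1_1_reflect:
  "qcong p 2 (progression_sum 1 1) (- progression_sum 1 3 - P * progression_sum 2 3)"
proof -
  have "progression_sum 1 1 = (\<Sum>j<m. 1 / of_nat (3 * (m - Suc j) + 1))"
    unfolding progression_sum_def power_one_right by (rule sum.nat_diff_reindex[symmetric])
  also have "\<dots> = (\<Sum>j<m. 1 / (P - of_nat (3 * j + 3)))"
    by (intro sum.cong refl) (simp only: lessThan_iff progression_reflect)
  also have "qcong p 2 \<dots> (\<Sum>j<m. - 1 / of_nat (3 * j + 3) - P / of_nat (3 * j + 3) ^ 2)"
    by (intro qcong_sum inverse_p_minus; use progression_below_p[of _ 3] in simp)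
  also have "(\<Sum>j<m. - 1 / of_nat (3 * j + 3) - P / of_nat (3 * j + 3) ^ 2)
      = - progression_sum 1 3 - P * progression_sum 2 3"
    unfolding progression_sum_def power_one_right sum_subtractf sum_distrib_left by (simp add: sum_negf)
  finally show ?thesis .
qed

lemma progression_sum_1_2_reflect: "qcong p 2 (2 * progression_sum 1 2) (- P * progression_sum 2 2)"
proof -
  have "progression_sum 1 2 = (\<Sum>j<m. 1 / of_nat (3 * (m - Suc j) + 2))"
    unfolding progression_sum_def power_one_right by (rule sum.nat_diff_reindex[symmetric])
  also have "\<dots> = (\<Sum>j<m. 1 / (P - of_nat (3 * j + 2)))"
    by (intro sum.cong refl) (simp only: lessThan_iff progression_reflect)
  also have "qcong p 2 \<dots> (\<Sum>j<m. - 1 / of_nat (3 * j + 2) - P / of_nat (3 * j + 2) ^ 2)"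
    by (intro qcong_sum inverse_p_minus; use progression_below_p[of _ 2] in simp)
  also have "(\<Sum>j<m. - 1 / of_nat (3 * j + 2) - P / of_nat (3 * j + 2) ^ 2)
      = - progression_sum 1 2 - P * progression_sum 2 2"
    unfolding progression_sum_def power_one_right sum_subtractf sum_distrib_left by (simp add: sum_negf)
  finally have "qcong p 2 (progression_sum 1 2 + progression_sum 1 2)
      (- progression_sum 1 2 - P * progression_sum 2 2 + progression_sum 1 2)"
    by (intro qcong_add) simp_all
  moreover have "progression_sum 1 2 + progression_sum 1 2 = 2 * progression_sum 1 2"
    "- progression_sum 1 2 - P * progression_sum 2 2 + progression_sum 1 2 = - P * progression_sum 2 2"
    by simp_all
  ultimately show ?thesis by (simp only:)
qed

lemma progression_sum_2_1_reflect: "qcong p 1 (progression_sum 2 1) (progression_sum 2 3)"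
proof -
  have "progression_sum 2 1 = (\<Sum>j<m. 1 / of_nat (3 * (m - Suc j) + 1) ^ 2)"
    unfolding progression_sum_def by (rule sum.nat_diff_reindex[symmetric])
  also have "\<dots> = (\<Sum>j<m. 1 / (P - of_nat (3 * j + 3)) ^ 2)"
    by (intro sum.cong refl) (simp only: lessThan_iff progression_reflect)
  also have "qcong p 1 \<dots> (progression_sum 2 3)"
    unfolding progression_sum_def
    by (intro qcong_sum inverse_p_minus_squared; use progression_below_p[of _ 3] in simp)
  finally show ?thesis .
qed

lemma progression_sums_2_qcong_0:
  "qcong p 1 (progression_sum 2 1 + progression_sum 2 2 + progression_sum 2 3) 0"
proof -
  have "(\<Sum>r = 1..<p. 1 / of_nat r ^ 2 :: rat) = (\<Sum>k<3 * m. 1 / of_nat (Suc k) ^ 2)"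
    using p_eq sum.shift_bounds_Suc_ivl[of "\<lambda>r. 1 / of_nat r ^ 2 :: rat" 0 "3 * m"]
    by (simp add: atLeast0LessThan)
  also have "\<dots> = progression_sum 2 1 + progression_sum 2 2 + progression_sum 2 3"
    unfolding progression_sum_def by (subst sum_lessThan_3_mult) (simp add: sum.distrib algebra_simps)
  finally show ?thesis using sum_inverse_squares_qcong_0 by simp
qed

lemma progression_sums_mod_p:
  "qcong p 1 (progression_sum 1 3) (- progression_sum 1 1)"
  "qcong p 1 (progression_sum 2 3) (progression_sum 2 1)"
  "qcong p 1 (progression_sum 1 2) 0"
  "qcong p 1 (progression_sum 2 2) (- 2 * progression_sum 2 1)"
proof -
  have integral: "p_integral p (progression_sum e r)" if "r \<in> {1, 2, 3}" for e r
    using that by (intro p_integral_progression_sum) auto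
  have "qcong p 1 (progression_sum 1 1) (P ^ 1 * (- progression_sum 2 3) + - progression_sum 1 3)"
    using qcong_mono[OF progression_sum_1_1_reflect] by (simp add: algebra_simps)
  also have "qcong p 1 \<dots> (- progression_sum 1 3)"
    using integral by (intro qcong_p_multiple) auto
  finally show "qcong p 1 (progression_sum 1 3) (- progression_sum 1 1)"
    using qcong_uminus qcong_sym by fastforce
  show d: "qcong p 1 (progression_sum 2 3) (progression_sum 2 1)"
    by (rule qcong_sym[OF progression_sum_2_1_reflect])
  have "qcong p 1 (2 * progression_sum 1 2) (P ^ 1 * (- progression_sum 2 2) + 0)"
    using qcong_mono[OF progression_sum_1_2_reflect] by simp
  also have "qcong p 1 \<dots> 0"
    using integral by (intro qcong_p_multiple) auto
  finally have "qcong p 1 (1 / 2 * (2 * progression_sum 1 2)) (1 / 2 * 0)"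
    by (intro qcong_mult_left) simp_all
  then show "qcong p 1 (progression_sum 1 2) 0" by simp
  have "qcong p 1 (progression_sum 2 2 - (progression_sum 2 1 + progression_sum 2 2 + progression_sum 2 3))
      (progression_sum 2 2 - 0)"
    by (intro qcong_diff qcong_refl progression_sums_2_qcong_0)
  then have "qcong p 1 (progression_sum 2 2) (- progression_sum 2 1 - progression_sum 2 3)"
    using qcong_sym by fastforce
  also have "qcong p 1 \<dots> (- progression_sum 2 1 - progression_sum 2 1)"
    by (intro qcong_diff qcong_refl d)
  finally show "qcong p 1 (progression_sum 2 2) (- 2 * progression_sum 2 1)"
    by simp
qed

lemma shift_ratio_lhs_expansion:
  defines "a \<equiv> progression_sum 1 1" and "b \<equiv> progression_sum 2 1"
    and "c \<equiv> progression_sum 1 3" and "d \<equiv> progression_sum 2 3"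
  shows "qcong p 3 (shift_ratio (- 1) 3 ^ 2 * shift_ratio 1 1 ^ 6)
    (second_order (6 * a - 2 * c) (2 * c ^ 2 - d + 18 * a ^ 2 - 3 * b - 12 * a * c))"
proof -
  have integral: "p_integral p a" "p_integral p b" "p_integral p c" "p_integral p d"
    unfolding assms by (auto intro: p_integral_progression_sum)
  have "qcong p 3 (shift_ratio (- 1) 3) (second_order (- c) ((c ^ 2 - d) / 2))"
    using shift_ratio_expansion[of "- 1" 3] unfolding c_def d_def by simp
  then have "qcong p 3 (shift_ratio (- 1) 3 ^ 2) (second_order (of_nat 2 * - c)
      (of_nat 2 * ((c ^ 2 - d) / 2) + (of_nat 2 * (of_nat 2 - 1) / 2) * (- c) ^ 2))"
    using integral by (intro second_order_power) auto
  also have "second_order (of_nat 2 * - c) (of_nat 2 * ((c ^ 2 - d) / 2) + (of_nat 2 * (of_nat 2 - 1) / 2) * (- c) ^ 2)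
      = second_order (- 2 * c) (2 * c ^ 2 - d)"
    by (rule arg_cong2[where f = second_order]) (simp_all add: field_simps)
  finally have square: "qcong p 3 (shift_ratio (- 1) 3 ^ 2) (second_order (- 2 * c) (2 * c ^ 2 - d))" .
  have "qcong p 3 (shift_ratio 1 1) (second_order a ((a ^ 2 - b) / 2))"
    using shift_ratio_expansion[of 1 1] unfolding a_def b_def by simp
  then have "qcong p 3 (shift_ratio 1 1 ^ 6) (second_order (of_nat 6 * a)
      (of_nat 6 * ((a ^ 2 - b) / 2) + (of_nat 6 * (of_nat 6 - 1) / 2) * a ^ 2))"
    using integral by (intro second_order_power) auto
  also have "second_order (of_nat 6 * a) (of_nat 6 * ((a ^ 2 - b) / 2) + (of_nat 6 * (of_nat 6 - 1) / 2) * a ^ 2)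
      = second_order (6 * a) (18 * a ^ 2 - 3 * b)"
    by (rule arg_cong2[where f = second_order]) (simp_all add: field_simps)
  finally have sixth: "qcong p 3 (shift_ratio 1 1 ^ 6) (second_order (6 * a) (18 * a ^ 2 - 3 * b))" .
  have "qcong p 3 (shift_ratio (- 1) 3 ^ 2 * shift_ratio 1 1 ^ 6)
      (second_order (- 2 * c + 6 * a) (2 * c ^ 2 - d + (18 * a ^ 2 - 3 * b) + - 2 * c * (6 * a)))"
    using square sixth integral by (intro second_order_mult) auto
  then show ?thesis by (simp add: algebra_simps)
qed

lemma shift_ratio_rhs_expansion:
  defines "a \<equiv> progression_sum 1 1" and "b \<equiv> progression_sum 2 1"
    and "s \<equiv> progression_sum 1 2" and "t \<equiv> progression_sum 2 2"
  defines "x \<equiv> s + 2 * a" and "y \<equiv> (s ^ 2 - t) / 2 + (2 * a ^ 2 - 2 * b) + s * (2 * a)"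
  shows "qcong p 3 ((1 + P ^ 2 * t) * (shift_ratio 1 2 * shift_ratio 2 1) ^ 4)
    (second_order (4 * x) (t + (4 * y + 6 * x ^ 2)))"
proof -
  have integral: "p_integral p a" "p_integral p b" "p_integral p s" "p_integral p t"
    unfolding assms by (auto intro: p_integral_progression_sum)
  then have integral': "p_integral p x" "p_integral p y"
    unfolding x_def y_def by auto
  have "qcong p 3 (shift_ratio 1 2) (second_order s ((s ^ 2 - t) / 2))"
    using shift_ratio_expansion[of 1 2] unfolding s_def t_def by simp
  moreover have "qcong p 3 (shift_ratio 2 1) (second_order (2 * a) (2 * a ^ 2 - 2 * b))"
  proof -
    have "qcong p 3 (shift_ratio 2 1) (second_order (2 * a) (2 ^ 2 * (a ^ 2 - b) / 2))"
      using shift_ratio_expansion[of 2 1] unfolding a_def b_def by simp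
    also have "2 ^ 2 * (a ^ 2 - b) / 2 = 2 * a ^ 2 - 2 * b"
      by (simp add: field_simps)
    finally show ?thesis .
  qed
  ultimately have "qcong p 3 (shift_ratio 1 2 * shift_ratio 2 1) (second_order x y)"
    unfolding x_def y_def using integral by (intro second_order_mult) auto
  then have "qcong p 3 ((shift_ratio 1 2 * shift_ratio 2 1) ^ 4)
      (second_order (of_nat 4 * x) (of_nat 4 * y + (of_nat 4 * (of_nat 4 - 1) / 2) * x ^ 2))"
    using integral' by (intro second_order_power) auto
  also have "second_order (of_nat 4 * x) (of_nat 4 * y + (of_nat 4 * (of_nat 4 - 1) / 2) * x ^ 2)
      = second_order (4 * x) (4 * y + 6 * x ^ 2)"
    by (rule arg_cong2[where f = second_order]) simp_all
  finally have "qcong p 3 ((shift_ratio 1 2 * shift_ratio 2 1) ^ 4) (second_order (4 * x) (4 * y + 6 * x ^ 2))" .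
  then have "qcong p 3 (second_order 0 t * (shift_ratio 1 2 * shift_ratio 2 1) ^ 4)
      (second_order (0 + 4 * x) (t + (4 * y + 6 * x ^ 2) + 0 * (4 * x)))"
    using integral integral' by (intro second_order_mult) auto
  then show ?thesis by (simp add: second_order_def)
qed

lemma shift_ratio_second_order_terms_qcong:
  defines "a \<equiv> progression_sum 1 1" and "b \<equiv> progression_sum 2 1"
    and "c \<equiv> progression_sum 1 3" and "d \<equiv> progression_sum 2 3"
    and "s \<equiv> progression_sum 1 2" and "t \<equiv> progression_sum 2 2"
  defines "x \<equiv> s + 2 * a" and "y \<equiv> (s ^ 2 - t) / 2 + (2 * a ^ 2 - 2 * b) + s * (2 * a)"
  shows "qcong p 1 (t + (4 * y + 6 * x ^ 2) + - (2 * d + 2 * t))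
    (2 * c ^ 2 - d + 18 * a ^ 2 - 3 * b - 12 * a * c)"
proof -
  \<comment> \<open>modulo \<open>p\<close> we may substitute \<open>c = -a\<close>, \<open>d = b\<close>, \<open>s = 0\<close> and \<open>t = -2b\<close>\<close>
  obtain e1 e2 e3 e4 where e: "p_integral p e1" "p_integral p e2" "p_integral p e3" "p_integral p e4"
    and sub: "c = - a + P * e1" "d = b + P * e2" "s = P * e3" "t = - 2 * b + P * e4"
    using progression_sums_mod_p unfolding assms(1-6) qcong_iff
    by (metis add.commute diff_add_cancel power_one_right add_0 diff_0_right)
  have integral: "p_integral p a" "p_integral p b"
    unfolding assms by (auto intro: p_integral_progression_sum)
  let ?Z = "- 3 * e4 + 8 * P * e3 ^ 2 + 32 * a * e3 - e2 + 16 * a * e1 - 2 * P * e1 ^ 2"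
  have eq: "t + (4 * y + 6 * x ^ 2) + - (2 * d + 2 * t)
      = P ^ 1 * ?Z + (2 * c ^ 2 - d + 18 * a ^ 2 - 3 * b - 12 * a * c)"
    unfolding x_def y_def sub by (simp add: field_simps power2_eq_square)
  show ?thesis
    unfolding eq by (rule qcong_p_multiple) (use e integral in simp)
qed

lemma shift_ratio_core_qcong:
  "qcong p 3 (shift_ratio (- 1) 3 ^ 2 * shift_ratio 1 1 ^ 6)
    ((1 + P ^ 2 * progression_sum 2 2) * (shift_ratio 1 2 * shift_ratio 2 1) ^ 4)"
proof -
  define a b c d s t where "a = progression_sum 1 1" and "b = progression_sum 2 1"
    and "c = progression_sum 1 3" and "d = progression_sum 2 3"
    and "s = progression_sum 1 2" and "t = progression_sum 2 2"
  define x y where "x = s + 2 * a" and "y = (s ^ 2 - t) / 2 + (2 * a ^ 2 - 2 * b) + s * (2 * a)"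
  have first_order: "qcong p 2 (4 * x) ((6 * a - 2 * c) + P * (- (2 * d + 2 * t)))"
  proof -
    have "qcong p 2 (2 * (2 * s) + 2 * a + (2 * c + 6 * a - 2 * c))
        (2 * (- P * t) + 2 * (- c - P * d) + (2 * c + 6 * a - 2 * c))"
      using progression_sum_1_2_reflect progression_sum_1_1_reflect unfolding a_def c_def d_def s_def t_def
      by (intro qcong_add qcong_mult_left) simp_all
    then show ?thesis unfolding x_def by (simp add: algebra_simps)
  qed
  have "qcong p 3 (second_order (4 * x) (t + (4 * y + 6 * x ^ 2)))
      (second_order (6 * a - 2 * c) (2 * c ^ 2 - d + 18 * a ^ 2 - 3 * b - 12 * a * c))"
    using first_order shift_ratio_second_order_terms_qcong
    unfolding x_def y_def a_def b_def c_def d_def s_def t_def by (rule second_order_cong)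
  then show ?thesis
    using shift_ratio_lhs_expansion shift_ratio_rhs_expansion
    unfolding x_def y_def a_def b_def c_def d_def s_def t_def by (meson qcong_sym qcong_trans)
qed

lemma gamma_tail_ratio_qcong:
  "qcong p 3 (gamma_tail ^ 6 / fact (p - 1) ^ 4)
    ((progression_prod 2 / progression_prod 3) ^ 2 * (1 + P ^ 2 * progression_sum 2 2))"
proof -
  define K where "K = (progression_prod 2 / progression_prod 3) ^ 2 / 3 ^ (12 * m)"
  have "p_integral p K"
  proof -
    have "K = (progression_prod 2 * (1 / progression_prod 3)) ^ 2 * ((1 / 3) ^ m) ^ 12"
      unfolding K_def by (simp add: power_divide flip: power_mult)
    moreover have "p_integral p ((progression_prod 2 * (1 / progression_prod 3)) ^ 2 * ((1 / 3) ^ m) ^ 12)"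
      using p_integral_third[of 1]
      by (intro p_integral_mult p_integral_power p_integral_progression_prod p_integral_inverse_progression_prod) auto
    ultimately show ?thesis by simp
  qed
  then have "qcong p 3 (K * (shift_ratio (- 1) 3 ^ 2 * shift_ratio 1 1 ^ 6))
      (K * ((1 + P ^ 2 * progression_sum 2 2) * (shift_ratio 1 2 * shift_ratio 2 1) ^ 4))"
    by (intro qcong_mult_left shift_ratio_core_qcong)
  moreover have "(shift_ratio 1 2 * shift_ratio 2 1) ^ 4 = 3 ^ (12 * m)"
    unfolding three_power_eq_shift_ratios[symmetric] by (simp flip: power_mult)
  ultimately show ?thesis
    unfolding gamma_tail_ratio_eq K_def[symmetric] by (simp add: K_def)
qed

lemma p_integral_gamma_tail: "p_integral p gamma_tail"
  unfolding gamma_tail_def by (intro p_integral_prod) simp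

lemma gamma_tail_qcong:
  assumes "3 * q + 2 = p\<^sup>2 * k"
  shows "qcong p 3 (\<Prod>s = 1..<2 * m + 1. of_nat (q * p + s)) gamma_tail"
  unfolding gamma_tail_def
proof (rule qcong_prod)
  fix s
  have "(of_nat (q * p + s) :: rat) = P * (3 * of_nat q + 2) / 3 + (of_nat s - 2 * P / 3)"
    by (simp add: field_simps)
  also have "(3 * of_nat q + 2 :: rat) = P\<^sup>2 * of_nat k"
    using arg_cong[OF assms, of "of_nat :: nat \<Rightarrow> rat"] by simp
  finally have "(of_nat (q * p + s) :: rat) = P ^ 3 * (of_nat k / 3) + (of_nat s - 2 * P / 3)"
    by (simp add: power2_eq_square power3_eq_cube)
  then show "qcong p 3 (of_nat (q * p + s)) (of_nat s - 2 * P / 3)"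
    by (simp only:) (intro qcong_p_multiple p_integral_third p_integral_of_nat)
qed simp

lemma padic_gamma_nat_power_6_qcong_gamma_tail:
  assumes "int p ^ 3 dvd 3 * int n - 1"
  shows "qcong p 3 (of_int (padic_gamma_nat p n) ^ 6) (gamma_tail ^ 6 / fact (p - 1) ^ 4)"
proof -
  define q where "q = n div p"
  have "int p dvd 3 * int n - 1"
    using assms by (rule dvd_trans[rotated]) simp
  moreover have "[3 * (2 * m + 1) = 1] (mod p)"
  proof -
    have "3 * (2 * m + 1) = 1 + p * 2" using p_eq by simp
    then show ?thesis unfolding cong_def by (simp only: mod_mult_self2)
  qed
  ultimately have "n mod p = 2 * m + 1"
    using p_eq ge_5 by (intro mod_eq_of_three_times_cong_1) auto
  then have n: "n = q * p + (2 * m + 1)"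
    unfolding q_def by (metis div_mult_mod_eq)
  then have "3 * int n - 1 = int p * int (3 * q + 2)"
    using p_eq by (simp add: algebra_simps)
  then have "int p ^ 2 dvd int (3 * q + 2)"
    using assms prime_gt_0_nat[OF prime] by (simp add: power3_eq_cube power2_eq_square mult.assoc)
  then obtain k where k: "3 * q + 2 = p\<^sup>2 * k"
    by (metis dvdE of_nat_dvd_iff of_nat_power)
  have "qcong p 3 (of_int (padic_gamma_nat p n) ^ 6)
      (fact (p - 1) ^ (6 * q) * (\<Prod>s = 1..<2 * m + 1. of_nat (q * p + s)) ^ 6)"
    unfolding n using p_eq by (intro padic_gamma_nat_power_6_qcong) auto
  also have "qcong p 3 \<dots> (1 / fact (p - 1) ^ 4 * gamma_tail ^ 6)"
  proof (rule qcong_mult)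
    show "qcong p 3 (fact (p - 1) ^ (6 * q)) (1 / fact (p - 1) ^ 4)"
      by (rule fact_power_qcong[OF k])
    show "qcong p 3 ((\<Prod>s = 1..<2 * m + 1. of_nat (q * p + s)) ^ 6) (gamma_tail ^ 6)"
      by (intro qcong_power gamma_tail_qcong[OF k] p_integral_gamma_tail)
    show "p_integral p (1 / fact (p - 1) ^ 4)"
      using p_integral_power[OF p_integral_inverse_fact, of 4] by (simp add: power_one_over)
  qed (simp add: p_integral_gamma_tail)
  finally show ?thesis by simp
qed

lemma pochhammer_third: "pochhammer (of_nat r / 3 :: rat) m = (1 / 3) ^ m * progression_prod r"
proof -
  have "pochhammer (of_nat r / 3 :: rat) m = (\<Prod>j<m. 1 / 3 * of_nat (3 * j + r))"
    unfolding pochhammer_prod atLeast0LessThan by (rule prod.cong) (simp_all add: field_simps)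
  then show ?thesis
    unfolding progression_prod_def by (simp only: prod.distrib prod_constant card_lessThan)
qed

lemma sum_inverse_squares_3i_minus_1: "(\<Sum>i = 1..m. 1 / (3 * of_nat i - 1)\<^sup>2) = progression_sum 2 2"
proof -
  have "(\<Sum>i = 1..m. 1 / (3 * of_nat i - 1)\<^sup>2 :: rat) = (\<Sum>j<m. 1 / (3 * of_nat (Suc j) - 1)\<^sup>2)"
    using sum.atLeast1_atMost_eq[of "\<lambda>i. 1 / (3 * of_nat i - 1)\<^sup>2 :: rat" m] by simp
  then show ?thesis
    unfolding progression_sum_def by (simp add: algebra_simps)
qed

theorem padic_lim_cong_1_mod_3:
  "padic_lim_cong p (\<lambda>n. of_int (padic_gamma_nat p n) ^ 6) (1 / 3) 3
    ((pochhammer (2 / 3) m)\<^sup>2 / (pochhammer 1 m)\<^sup>2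
      * (1 + P\<^sup>2 * (\<Sum>i = 1..m. 1 / (3 * of_nat i - 1)\<^sup>2)))"
proof -
  have "(pochhammer (2 / 3) m)\<^sup>2 / (pochhammer 1 m)\<^sup>2 * (1 + P\<^sup>2 * (\<Sum>i = 1..m. 1 / (3 * of_nat i - 1)\<^sup>2))
      = (progression_prod 2 / progression_prod 3) ^ 2 * (1 + P ^ 2 * progression_sum 2 2)"
    unfolding sum_inverse_squares_3i_minus_1 using pochhammer_third[of 2] pochhammer_third[of 3]
    by (simp add: power_mult_distrib power_divide)
  moreover have "qcong p 3 (of_int (padic_gamma_nat p n) ^ 6)
      ((progression_prod 2 / progression_prod 3) ^ 2 * (1 + P ^ 2 * progression_sum 2 2))"
    if "qcong p 3 (of_nat n) (1 / 3)" for n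
    using padic_gamma_nat_power_6_qcong_gamma_tail[OF qcong_third_imp_dvd[OF that]] gamma_tail_ratio_qcong
    by (rule qcong_trans)
  ultimately show ?thesis
    unfolding padic_lim_cong_def by auto
qed

end


section \<open>The case $p \equiv 2 \pmod 3$\<close>

locale prime_2_mod_3 = prime_ge_5 +
  fixes m :: nat
  assumes p_eq: "p = 3 * m + 2"
begin

lemma two_p_minus_1_div_3: "(2 * p - 1) div 3 = 2 * m + 1"
proof -
  have "2 * p - 1 = 3 * (2 * m + 1)" using p_eq by simp
  then show ?thesis by simp
qed

definition rest_sum :: rat where
  "rest_sum = (\<Sum>i \<in> {1..2 * m + 1} - {m + 1}. 1 / (3 * of_nat i - 1)\<^sup>2)"

lemma pochhammer_minus_m: "pochhammer (- of_nat m :: rat) m = (- 1) ^ m * fact m"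
  by (simp add: pochhammer_minus pochhammer_fact)

lemma pochhammer_two_thirds_qcong: "qcong p 1 (pochhammer (2 / 3) m) ((- 1) ^ m * fact m)"
proof -
  have "2 / 3 = P ^ 1 * (1 / 3) + (- of_nat m :: rat)"
    using p_eq by (simp add: field_simps)
  then have "qcong p 1 (2 / 3) (- of_nat m)"
    by (simp only:) (intro qcong_p_multiple p_integral_third p_integral_1)
  then show ?thesis
    unfolding pochhammer_minus_m[symmetric] by (intro qcong_pochhammer p_integral_uminus p_integral_of_nat)
qed

lemma pochhammer_third_p_plus_1_qcong: "qcong p 1 (pochhammer (P / 3 + 1) m) (fact m)"
proof -
  have "qcong p 1 (P ^ 1 * (1 / 3) + 1) 1"
    by (intro qcong_p_multiple p_integral_third p_integral_1)
  then show ?thesis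
    unfolding pochhammer_fact by (intro qcong_pochhammer) simp_all
qed

lemma pochhammer_two_thirds_split:
  "pochhammer (2 / 3 :: rat) (2 * m + 1) = P / 3 * pochhammer (2 / 3) m * pochhammer (P / 3 + 1) m"
proof -
  have "P / 3 = 2 / 3 + (of_nat m :: rat)" using p_eq by simp
  moreover have "2 * m + 1 = Suc m + m" by simp
  ultimately show ?thesis
    by (simp only: pochhammer_product' pochhammer_Suc) (simp add: ac_simps)
qed

lemma fact_middle_qcong: "qcong p 1 (fact (2 * m + 1) ^ 2 * fact m ^ 2) 1"
proof -
  have "(fact (p - 1) :: rat) = fact (2 * m + 1) * pochhammer (P ^ 1 * 1 + - of_nat m) m"
  proof -
    have "p - 1 = 2 * m + 1 + m" "1 + of_nat (2 * m + 1) = P ^ 1 * 1 + (- of_nat m :: rat)"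
      using p_eq by simp_all
    then show ?thesis by (simp only: pochhammer_fact pochhammer_product')
  qed
  also have "qcong p 1 \<dots> (fact (2 * m + 1) * ((- 1) ^ m * fact m))"
    unfolding pochhammer_minus_m[symmetric]
    by (intro qcong_mult_left qcong_pochhammer qcong_p_multiple p_integral_uminus p_integral_of_nat
        p_integral_fact p_integral_1)
  finally have "qcong p 1 (- 1) (fact (2 * m + 1) * ((- 1) ^ m * fact m))"
    by (rule qcong_trans[OF qcong_sym[OF wilson_qcong]])
  then have "qcong p 1 ((- 1) ^ 2) ((fact (2 * m + 1) * ((- 1) ^ m * fact m)) ^ 2)"
    by (intro qcong_power) simp_all
  moreover have "((- 1 :: rat) ^ m) ^ 2 = 1"
    by (simp flip: power_mult add: mult.commute)
  ultimately show ?thesis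
    by (simp add: power_mult_distrib qcong_sym)
qed

lemma sum_inverse_squares_eq_rest_sum:
  "(\<Sum>i = 1..2 * m + 1. 1 / (3 * of_nat i - 1)\<^sup>2) = 1 / P\<^sup>2 + rest_sum"
  unfolding rest_sum_def using p_eq by (subst sum.remove[of _ "m + 1"]) auto

lemma p_integral_rest_sum: "p_integral p rest_sum"
  unfolding rest_sum_def
proof (intro p_integral_sum)
  fix i assume i: "i \<in> {1..2 * m + 1} - {m + 1}"
  then have eq: "(3 * of_nat i - 1 :: rat) = of_nat (3 * i - 1)" by (simp add: of_nat_diff)
  moreover have "\<not> p dvd (3 * i - 1)"
  proof
    assume "p dvd 3 * i - 1"
    then obtain c where c: "3 * i - 1 = p * c" by (rule dvdE)
    have "0 < 3 * i - 1" "3 * i - 1 < p * 2" "3 * i - 1 \<noteq> p" using i p_eq by auto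
    then have "0 < c" "c < 2" "c \<noteq> 1" unfolding c by (auto simp: mult_less_cancel1)
    then show False by simp
  qed
  then have "p_integral p ((1 / of_nat (3 * i - 1)) ^ 2)"
    by (intro p_integral_power p_integral_inverse_of_nat)
  then show "p_integral p (1 / (3 * of_nat i - 1)\<^sup>2)"
    unfolding eq by (simp only: power_one_over)
qed

lemma padic_gamma_nat_power_6_qcong_fact:
  assumes "int p dvd 3 * int n - 1"
  shows "qcong p 1 (of_int (padic_gamma_nat p n) ^ 6) (fact m ^ 6)"
proof -
  define q where "q = n div p"
  have "[3 * (m + 1) = 1] (mod p)"
  proof -
    have "3 * (m + 1) = 1 + p * 1" using p_eq by simp
    then show ?thesis unfolding cong_def by (simp only: mod_mult_self2)
  qed
  then have "n mod p = m + 1"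
    using assms p_eq by (intro mod_eq_of_three_times_cong_1) auto
  then have n: "n = q * p + (m + 1)"
    unfolding q_def by (metis div_mult_mod_eq)
  have "qcong p 1 (of_int (padic_gamma_nat p n) ^ 6)
      (fact (p - 1) ^ (6 * q) * (\<Prod>s = 1..<m + 1. of_nat (q * p + s)) ^ 6)"
    unfolding n using p_eq by (intro qcong_mono[OF padic_gamma_nat_power_6_qcong]) auto
  also have "fact (p - 1) ^ (6 * q) = (fact (p - 1) ^ 2) ^ (3 * q)"
    by (simp flip: power_mult)
  also have "qcong p 1 ((fact (p - 1) ^ 2) ^ (3 * q) * (\<Prod>s = 1..<m + 1. of_nat (q * p + s)) ^ 6)
      (((- 1) ^ 2) ^ (3 * q) * fact m ^ 6)"
  proof (rule qcong_mult)
    show "qcong p 1 ((fact (p - 1) ^ 2) ^ (3 * q)) (((- 1) ^ 2) ^ (3 * q))"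
      by (intro qcong_power wilson_qcong) simp_all
    have "qcong p 1 (\<Prod>s = 1..<m + 1. of_nat (q * p + s)) (\<Prod>s = 1..<m + 1. of_nat s)"
    proof (rule qcong_prod)
      fix s
      show "qcong p 1 (of_nat (q * p + s)) (of_nat s)"
        using qcong_p_multiple[of "of_nat q" 1 "of_nat s"] by (simp add: algebra_simps)
    qed simp
    then show "qcong p 1 ((\<Prod>s = 1..<m + 1. of_nat (q * p + s)) ^ 6) (fact m ^ 6)"
      by (intro qcong_power[OF _ p_integral_fact]) (simp add: fact_prod atLeastLessThanSuc_atLeastAtMost of_nat_prod)
  qed simp_all
  finally show ?thesis by simp
qed

lemma target_2_mod_3_eq:
  "(pochhammer (2 / 3) (2 * m + 1))\<^sup>2 / (pochhammer 1 (2 * m + 1))\<^sup>2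
      * (1 - 4 * P\<^sup>2 * (\<Sum>i = 1..2 * m + 1. 1 / (3 * of_nat i - 1)\<^sup>2))
    = P\<^sup>2 * ((pochhammer (2 / 3) m * pochhammer (P / 3 + 1) m / fact (2 * m + 1)) ^ 2
      * (- 3 - 4 * P\<^sup>2 * rest_sum) / 9)"
proof -
  have algebra: "(x / 3 * a * b)\<^sup>2 / f\<^sup>2 * (1 - 4 * x\<^sup>2 * (1 / x\<^sup>2 + r))
      = x\<^sup>2 * ((a * b / f) ^ 2 * (- 3 - 4 * x\<^sup>2 * r) / 9)" if "x \<noteq> 0" "f \<noteq> 0" for a b f r x :: rat
    using that by (simp add: field_simps power2_eq_square)
  show ?thesis
    unfolding pochhammer_two_thirds_split sum_inverse_squares_eq_rest_sum pochhammer_fact[symmetric]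
    by (rule algebra) (use ge_5 in simp_all)
qed

lemma target_2_mod_3_qcong:
  "qcong p 1 ((pochhammer (2 / 3) m * pochhammer (P / 3 + 1) m / fact (2 * m + 1)) ^ 2
      * (- 3 - 4 * P\<^sup>2 * rest_sum) / 9) (- (fact m ^ 6) / 3)"
proof -
  define A B G where "A = pochhammer (2 / 3 :: rat) m" and "B = pochhammer (P / 3 + 1) m"
    and "G = 1 / (fact (2 * m + 1) :: rat)"
  have "\<not> p dvd fact (2 * m + 1)"
    by (subst prime_dvd_fact_iff[OF prime]) (simp add: p_eq)
  then have integral_G: "p_integral p G"
    unfolding G_def by (metis of_nat_fact p_integral_inverse_of_nat)
  have "qcong p 1 (A * B) ((- 1) ^ m * fact m * fact m)"
    unfolding A_def B_def
    by (rule qcong_mult[OF pochhammer_two_thirds_qcong pochhammer_third_p_plus_1_qcong]) simp_all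
  then have "qcong p 1 (A * B * G) ((- 1) ^ m * fact m * fact m * G)"
    using integral_G by (intro qcong_mult[OF _ qcong_refl]) simp_all
  moreover have "qcong p 1 (- 3 - 4 * P\<^sup>2 * rest_sum) (- 3)"
  proof -
    have "- 3 - 4 * P\<^sup>2 * rest_sum = P ^ 1 * (- 4 * P * rest_sum) + - 3"
      by (simp add: algebra_simps power2_eq_square)
    then show ?thesis
      using p_integral_rest_sum by (simp only:) (intro qcong_p_multiple; simp)
  qed
  ultimately have "qcong p 1 ((A * B * G) ^ 2 * (- 3 - 4 * P\<^sup>2 * rest_sum))
      (((- 1) ^ m * fact m * fact m * G) ^ 2 * - 3)"
    using integral_G by (intro qcong_mult[OF qcong_power]) simp_all
  also have "((- 1) ^ m * fact m * fact m * G) ^ 2 * - 3 = - 3 * fact m ^ 4 * G ^ 2"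
    by (simp add: power_mult_distrib algebra_simps flip: power_mult)
  also have "qcong p 1 \<dots> (- 3 * fact m ^ 4 * fact m ^ 2)"
  proof -
    have "qcong p 1 (G ^ 2 * (fact (2 * m + 1) ^ 2 * fact m ^ 2)) (G ^ 2 * 1)"
      using integral_G by (intro qcong_mult_left fact_middle_qcong) simp
    then have "qcong p 1 (G ^ 2) (fact m ^ 2)"
      unfolding G_def by (simp add: power_one_over qcong_sym)
    then show ?thesis by (intro qcong_mult_left) simp_all
  qed
  finally have "qcong p 1 (1 / 9 * ((A * B * G) ^ 2 * (- 3 - 4 * P\<^sup>2 * rest_sum)))
      (1 / 9 * (- 3 * fact m ^ 4 * fact m ^ 2))"
    using p_integral_third[OF p_integral_third[OF p_integral_1]] by (intro qcong_mult_left) simp_all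
  then show ?thesis
    unfolding A_def B_def G_def by (simp add: field_simps flip: power_add)
qed

theorem padic_lim_cong_2_mod_3:
  "padic_lim_cong p (\<lambda>n. - (P\<^sup>2 / 3) * of_int (padic_gamma_nat p n) ^ 6) (1 / 3) 3
    ((pochhammer (2 / 3) (2 * m + 1))\<^sup>2 / (pochhammer 1 (2 * m + 1))\<^sup>2
      * (1 - 4 * P\<^sup>2 * (\<Sum>i = 1..2 * m + 1. 1 / (3 * of_nat i - 1)\<^sup>2)))"
  unfolding padic_lim_cong_def target_2_mod_3_eq
proof (intro exI allI impI)
  fix n assume "qcong p 3 (of_nat n) (1 / 3)"
  then have "int p dvd 3 * int n - 1"
    by (intro dvd_trans[OF _ qcong_third_imp_dvd]) simp_all
  then have "qcong p 1 (- 1 / 3 * of_int (padic_gamma_nat p n) ^ 6) (- (fact m ^ 6) / 3)"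
    using qcong_mult_left[OF padic_gamma_nat_power_6_qcong_fact, of n "- 1 / 3"] by simp
  then have "qcong p (1 + 2) (P\<^sup>2 * (- 1 / 3 * of_int (padic_gamma_nat p n) ^ 6))
      (P\<^sup>2 * ((pochhammer (2 / 3) m * pochhammer (P / 3 + 1) m / fact (2 * m + 1)) ^ 2
        * (- 3 - 4 * P\<^sup>2 * rest_sum) / 9))"
    by (intro qcong_mult_p_power qcong_trans[OF _ qcong_sym[OF target_2_mod_3_qcong]])
  moreover have "(1 + 2 :: nat) = 3" by simp
  ultimately show "qcong p 3 (- (P\<^sup>2 / 3) * of_int (padic_gamma_nat p n) ^ 6)
      (P\<^sup>2 * ((pochhammer (2 / 3) m * pochhammer (P / 3 + 1) m / fact (2 * m + 1)) ^ 2
        * (- 3 - 4 * P\<^sup>2 * rest_sum) / 9))"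
    by (simp only:) (simp add: field_simps)
qed

end

theorem proposition1p4:
  fixes p :: nat
  assumes "prime p" and "odd p"
  shows "([p = 1] (mod 3) \<longrightarrow>
           padic_lim_cong p (\<lambda>n. of_int (padic_gamma_nat p n) ^ 6) (1/3) 3
             ((pochhammer (2/3 :: rat) ((p - 1) div 3))\<^sup>2 / (pochhammer (1 :: rat) ((p - 1) div 3))\<^sup>2
              * (1 + (of_nat p)\<^sup>2 * (\<Sum>i = 1..(p - 1) div 3. 1 / (3 * of_nat i - 1)\<^sup>2))))
       \<and> ([p = 2] (mod 3) \<longrightarrow>
           padic_lim_cong p (\<lambda>n. - ((of_nat p)\<^sup>2 / 3) * of_int (padic_gamma_nat p n) ^ 6) (1/3) 3
             ((pochhammer (2/3 :: rat) ((2 * p - 1) div 3))\<^sup>2 / (pochhammer (1 :: rat) ((2 * p - 1) div 3))\<^sup>2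
              * (1 - 4 * (of_nat p)\<^sup>2 * (\<Sum>i = 1..(2 * p - 1) div 3. 1 / (3 * of_nat i - 1)\<^sup>2))))"
  apply (intro conjI impI)
  subgoal premises one_mod_3
  proof -
    interpret prime_1_mod_3 p "(p - 1) div 3"
      using assms one_mod_3 prime_ge_2_nat[OF assms(1)] unfolding cong_def by unfold_locales presburger+
    show ?thesis by (rule padic_lim_cong_1_mod_3)
  qed
  subgoal premises two_mod_3
  proof -
    interpret prime_2_mod_3 p "(p - 2) div 3"
      using assms two_mod_3 prime_ge_2_nat[OF assms(1)] unfolding cong_def by unfold_locales presburger+
    show ?thesis unfolding two_p_minus_1_div_3 by (rule padic_lim_cong_2_mod_3)
  qed
  done

end
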